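(* Let $Q\colon\mathbb{R}^p\to\mathbb{R}$ be a polynomial and let $P_1$ be a program on the dictionary $\mathcal{D}_1=\{+,\times,\mathrm{ReLU},+c,\times c\}$ such that $[P_1](x)=Q(x)$ for all $x$ in a nonempty open set $S\subset\mathbb{R}^p$. Then there is a program $P_2$ on the dictionary $\mathcal{D}=\{+,\times,+c,\times c\}$ such that $[P_2]=Q$ on all of $\mathbb{R}^p$. Furthermore, if $\mathrm{cost}(\mathrm{ReLU})=\mathrm{cost}(\times c)$, then $\mathrm{cost}(P_2)=\mathrm{cost}(P_1)$.
   Context: A program on a dictionary with $p$ inputs computes $x_i=g_i((x_j)_{j\in\mathrm{pr}(i)})$, $i=p+1,\dots,m$, with $g_i$ in the dictionary applied to earlier values ($j<i$), returning $x_m$; $[P]$ denotes the computed function and $\mathrm{cost}(P)=\sum_i\mathrm{cost}(g_i)$. $+c$ and $\times c$ denote addition and multiplication by a fixed real constant; $\mathrm{ReLU}(t)=\max(0,t)$. *)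

theory Defs
  imports Main "HOL.Real"
begin

text \<open>Points of R^p are represented as real lists of length p.
  Program values x_1..x_m are stored 0-based: positions 0..p-1 are the inputs,
  position p+k is the value of the k-th instruction.\<close>

datatype op_kind = OpAdd | OpMul | OpRelu | OpAddC | OpMulC

datatype instr =
    Add nat nat
  | Mul nat nat
  | Relu nat
  | AddC real nat
  | MulC real nat

fun kind :: "instr \<Rightarrow> op_kind" where
  "kind (Add _ _) = OpAdd"
| "kind (Mul _ _) = OpMul"
| "kind (Relu _) = OpRelu"
| "kind (AddC _ _) = OpAddC"
| "kind (MulC _ _) = OpMulC"

fun args :: "instr \<Rightarrow> nat list" where
  "args (Add j k) = [j, k]"
| "args (Mul j k) = [j, k]"
| "args (Relu j) = [j]"
| "args (AddC _ j) = [j]"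
| "args (MulC _ j) = [j]"

definition relu :: "real \<Rightarrow> real" where
  "relu t = max 0 t"

fun apply_instr :: "instr \<Rightarrow> real list \<Rightarrow> real" where
  "apply_instr (Add j k) v = v ! j + v ! k"
| "apply_instr (Mul j k) v = v ! j * v ! k"
| "apply_instr (Relu j) v = relu (v ! j)"
| "apply_instr (AddC c j) v = v ! j + c"
| "apply_instr (MulC c j) v = v ! j * c"

fun exec :: "instr list \<Rightarrow> real list \<Rightarrow> real list" where
  "exec [] v = v"
| "exec (i # is) v = exec is (v @ [apply_instr i v])"

text \<open>A program with p inputs: every argument of instruction k refers to an
  earlier value (index < p + k), and there is a value x_m to return.\<close>
definition wf_prog :: "nat \<Rightarrow> instr list \<Rightarrow> bool" where
  "wf_prog p P \<longleftrightarrow> 1 \<le> p + length P \<and>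
     (\<forall>k < length P. \<forall>j \<in> set (args (P ! k)). j < p + k)"

definition run :: "instr list \<Rightarrow> real list \<Rightarrow> real" where
  "run P xs = last (exec P xs)"

definition relu_free :: "instr list \<Rightarrow> bool" where
  "relu_free P \<longleftrightarrow> (\<forall>i \<in> set P. kind i \<noteq> OpRelu)"

definition prog_cost :: "(op_kind \<Rightarrow> real) \<Rightarrow> instr list \<Rightarrow> real" where
  "prog_cost c P = sum_list (map (\<lambda>i. c (kind i)) P)"

inductive poly_fun :: "nat \<Rightarrow> (real list \<Rightarrow> real) \<Rightarrow> bool" for p where
  pconst: "poly_fun p (\<lambda>x. a)"
| pcoord: "i < p \<Longrightarrow> poly_fun p (\<lambda>x. x ! i)"
| padd: "poly_fun p f \<Longrightarrow> poly_fun p g \<Longrightarrow> poly_fun p (\<lambda>x. f x + g x)"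
| pmul: "poly_fun p f \<Longrightarrow> poly_fun p g \<Longrightarrow> poly_fun p (\<lambda>x. f x * g x)"

text \<open>Open subsets of R^p (points = lists of length p), standard topology
  (equivalently given by the sup-metric).\<close>
definition open_Rp :: "nat \<Rightarrow> real list set \<Rightarrow> bool" where
  "open_Rp p S \<longleftrightarrow> (\<forall>x \<in> S. length x = p) \<and>
     (\<forall>x \<in> S. \<exists>e > 0. \<forall>y. length y = p \<and> (\<forall>i < p. \<bar>y ! i - x ! i\<bar> < e) \<longrightarrow> y \<in> S)"

end

theory Submission
  imports Defs "HOL-Computational_Algebra.Polynomial"
begin

text \<open>The ReLU gates are removed one at a time, shrinking the open set as we go. Inductively, the
  program read so far agrees on a nonempty open set U with a ReLU-free program, whose values are
  therefore polynomials. At a ReLU gate with polynomial argument g, either g > 0 somewhere in U, and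
  then ReLU acts as multiplication by 1 on the open set where g > 0, or g \<le> 0 on U and ReLU acts
  as multiplication by 0. Either way the gate becomes a scalar multiplication, so the cost is
  unchanged when the two costs agree. The final program computes a polynomial that coincides with Q
  on a nonempty open set, hence everywhere: on a line through a point of that set their difference
  is a univariate polynomial vanishing on an interval.\<close>

definition box_filter :: "nat \<Rightarrow> real list \<Rightarrow> real list filter" where
  "box_filter p x = (INF e\<in>{0<..}. principal {y. length y = p \<and> (\<forall>i<p. \<bar>y ! i - x ! i\<bar> < e)})"

lemma eventually_box_filter:
  "eventually P (box_filter p x) \<longleftrightarrow>
     (\<exists>e>0. \<forall>y. length y = p \<and> (\<forall>i<p. \<bar>y ! i - x ! i\<bar> < e) \<longrightarrow> P y)"
  unfolding box_filter_def
proof (subst eventually_INF_base)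
  show "\<exists>c\<in>{0<..}. principal {y. length y = p \<and> (\<forall>i<p. \<bar>y ! i - x ! i\<bar> < c)}
          \<le> inf (principal {y. length y = p \<and> (\<forall>i<p. \<bar>y ! i - x ! i\<bar> < a)})
                (principal {y. length y = p \<and> (\<forall>i<p. \<bar>y ! i - x ! i\<bar> < b)})"
    if "a \<in> {0<..}" "b \<in> {0<..}" for a b :: real
    using that by (intro bexI[of _ "min a b"]) auto
qed (auto simp: eventually_principal)

lemma open_Rp_iff_eventually:
  "open_Rp p S \<longleftrightarrow> (\<forall>x\<in>S. length x = p) \<and> (\<forall>x\<in>S. eventually (\<lambda>y. y \<in> S) (box_filter p x))"
  unfolding open_Rp_def eventually_box_filter ..

lemma tendsto_nth_box_filter: "i < p \<Longrightarrow> ((\<lambda>y. y ! i) \<longlongrightarrow> x ! i) (box_filter p x)"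
  unfolding tendsto_iff eventually_box_filter dist_real_def by blast

lemma poly_fun_tendsto_box_filter: "poly_fun p f \<Longrightarrow> (f \<longlongrightarrow> f x) (box_filter p x)"
  by (induction rule: poly_fun.induct) (auto intro: tendsto_add tendsto_mult tendsto_nth_box_filter)

lemma open_Rp_poly_fun_pos:
  assumes "open_Rp p U" "poly_fun p g"
  shows "open_Rp p {x\<in>U. g x > 0}"
  unfolding open_Rp_iff_eventually
proof (intro conjI ballI)
  fix x assume "x \<in> {x\<in>U. g x > 0}"
  then have "eventually (\<lambda>y. y \<in> U) (box_filter p x)" "eventually (\<lambda>y. g y > 0) (box_filter p x)"
    using assms order_tendstoD(1)[OF poly_fun_tendsto_box_filter] unfolding open_Rp_iff_eventually
    by auto
  then show "eventually (\<lambda>y. y \<in> {x\<in>U. g x > 0}) (box_filter p x)"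
    by (auto intro: eventually_conj)
qed (use assms(1) in \<open>auto simp: open_Rp_iff_eventually\<close>)

lemma poly_fun_on_line:
  assumes "poly_fun p f"
  shows "\<exists>q. \<forall>t. f (map (\<lambda>i. x ! i + t * (y ! i - x ! i)) [0..<p]) = poly q t"
  using assms
proof induction
  case (pconst a)
  show ?case by (intro exI[of _ "[:a:]"]) simp
next
  case (pcoord i)
  show ?case using pcoord by (intro exI[of _ "[:x ! i, y ! i - x ! i:]"]) (simp add: algebra_simps)
next
  case (padd f g)
  then show ?case by (metis poly_add)
next
  case (pmul f g)
  then show ?case by (metis poly_mult)
qed

lemma filterlim_line_box_filter:
  assumes "length x = p"
  shows "filterlim (\<lambda>t. map (\<lambda>i. x ! i + t * (y ! i - x ! i)) [0..<p]) (box_filter p x) (at 0)"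
  unfolding filterlim_iff
proof (intro allI impI)
  fix P assume "eventually P (box_filter p x)"
  then obtain e where e: "e > 0" "\<And>z. length z = p \<Longrightarrow> (\<forall>i<p. \<bar>z ! i - x ! i\<bar> < e) \<Longrightarrow> P z"
    unfolding eventually_box_filter by blast
  have "\<forall>i\<in>{..<p}. eventually (\<lambda>t. \<bar>t * (y ! i - x ! i)\<bar> < e) (at (0::real))"
  proof
    fix i
    have "((\<lambda>t. t * (y ! i - x ! i)) \<longlongrightarrow> 0 * (y ! i - x ! i)) (at (0::real))"
      by (intro tendsto_intros)
    then show "eventually (\<lambda>t. \<bar>t * (y ! i - x ! i)\<bar> < e) (at (0::real))"
      using e(1) by (auto simp: tendsto_iff dist_real_def)
  qed
  then have "eventually (\<lambda>t. \<forall>i\<in>{..<p}. \<bar>t * (y ! i - x ! i)\<bar> < e) (at (0::real))"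
    by (rule eventually_ball_finite[rotated]) simp
  then show "eventually (\<lambda>t. P (map (\<lambda>i. x ! i + t * (y ! i - x ! i)) [0..<p])) (at 0)"
    by (rule eventually_mono) (auto intro: e(2))
qed

lemma poly_eq_0_if_eventually_0:
  fixes q :: "real poly"
  assumes "eventually (\<lambda>t. poly q t = 0) (at a)"
  shows "q = 0"
proof -
  obtain d where "d > 0" and d: "\<And>t. t \<noteq> a \<Longrightarrow> dist t a < d \<Longrightarrow> poly q t = 0"
    using assms unfolding eventually_at by auto
  have "{a<..<a + d} \<subseteq> {t. poly q t = 0}"
  proof
    fix t assume "t \<in> {a<..<a + d}"
    then have "t \<noteq> a" "dist t a < d" by (auto simp: dist_real_def)
    then show "t \<in> {t. poly q t = 0}" using d by simp
  qed
  moreover have "infinite {a<..<a + d}" using \<open>d > 0\<close> by simp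
  ultimately have "infinite {t. poly q t = 0}" by (rule infinite_super)
  then show "q = 0" using poly_roots_finite by blast
qed

lemma poly_fun_diff:
  assumes "poly_fun p f" "poly_fun p g"
  shows "poly_fun p (\<lambda>x. f x - g x)"
proof -
  have "poly_fun p (\<lambda>x. f x + (\<lambda>_. - 1) x * g x)"
    by (intro poly_fun.padd poly_fun.pmul poly_fun.pconst assms)
  then show ?thesis by simp
qed

lemma poly_fun_eq_0_if_open:
  assumes "poly_fun p f" "open_Rp p U" "x \<in> U" "\<forall>z\<in>U. f z = 0" "length y = p"
  shows "f y = 0"
proof -
  define line where "line t = map (\<lambda>i. x ! i + t * (y ! i - x ! i)) [0..<p]" for t
  obtain q where q: "\<And>t. f (line t) = poly q t"
    using poly_fun_on_line[OF assms(1)] unfolding line_def by blast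
  have "length x = p" and near_x: "eventually (\<lambda>z. z \<in> U) (box_filter p x)"
    using assms(2,3) unfolding open_Rp_iff_eventually by auto
  have "eventually (\<lambda>t. line t \<in> U) (at 0)"
    unfolding line_def
    by (rule eventually_compose_filterlim[OF near_x filterlim_line_box_filter[OF \<open>length x = p\<close>]])
  then have "eventually (\<lambda>t. poly q t = 0) (at 0)"
  proof (rule eventually_mono)
    show "line t \<in> U \<Longrightarrow> poly q t = 0" for t using assms(4) q[of t] by simp
  qed
  then have "q = 0" by (rule poly_eq_0_if_eventually_0)
  moreover have "line 1 = y"
    using assms(5) by (intro nth_equalityI) (simp_all add: line_def)
  ultimately show ?thesis using q[of 1] by simp
qed

lemma poly_fun_eq_if_eq_on_open:
  assumes "poly_fun p f" "poly_fun p g" "open_Rp p U" "U \<noteq> {}" "\<forall>z\<in>U. f z = g z" "length y = p"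
  shows "f y = g y"
proof -
  obtain x where "x \<in> U" using assms(4) by blast
  with assms have "f y - g y = 0"
    by (intro poly_fun_eq_0_if_open[OF poly_fun_diff[OF assms(1,2)] assms(3)]) auto
  then show ?thesis by simp
qed

lemma exec_append: "exec (P @ P') v = exec P' (exec P v)"
  by (induction P arbitrary: v) auto

lemma exec_snoc: "exec (P @ [i]) v = exec P v @ [apply_instr i (exec P v)]"
  by (simp add: exec_append)

lemma length_exec: "length (exec P v) = length v + length P"
  by (induction P arbitrary: v) auto

lemma run_eq_nth_exec: "1 \<le> length v + length P \<Longrightarrow> run P v = exec P v ! (length v + length P - 1)"
  unfolding run_def using length_exec[of P v] by (subst last_conv_nth) auto

definition args_earlier :: "nat \<Rightarrow> instr list \<Rightarrow> bool" where
  "args_earlier p P \<longleftrightarrow> (\<forall>k<length P. \<forall>j\<in>set (args (P ! k)). j < p + k)"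

lemma wf_prog_iff_args_earlier: "wf_prog p P \<longleftrightarrow> 1 \<le> p + length P \<and> args_earlier p P"
  unfolding wf_prog_def args_earlier_def ..

lemma args_earlier_snoc:
  "args_earlier p (P @ [i]) \<longleftrightarrow> args_earlier p P \<and> (\<forall>j\<in>set (args i). j < p + length P)"
  unfolding args_earlier_def by (auto simp: nth_append less_Suc_eq)

definition poly_on_Rp :: "nat \<Rightarrow> (real list \<Rightarrow> real) \<Rightarrow> bool" where
  "poly_on_Rp p h \<longleftrightarrow> (\<exists>g. poly_fun p g \<and> (\<forall>x. length x = p \<longrightarrow> h x = g x))"

lemma poly_on_Rp_cong:
  "(\<And>x. length x = p \<Longrightarrow> h x = h' x) \<Longrightarrow> poly_on_Rp p h \<longleftrightarrow> poly_on_Rp p h'"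
  unfolding poly_on_Rp_def by simp

lemma poly_on_Rp_apply_instr:
  assumes "kind i \<noteq> OpRelu" and "\<forall>j\<in>set (args i). poly_on_Rp p (\<lambda>x. v x ! j)"
  shows "poly_on_Rp p (\<lambda>x. apply_instr i (v x))"
proof -
  obtain G where G: "\<And>j. j \<in> set (args i) \<Longrightarrow> poly_fun p (G j) \<and> (\<forall>x. length x = p \<longrightarrow> v x ! j = G j x)"
    using assms(2) unfolding poly_on_Rp_def by metis
  show ?thesis
  proof (cases i)
    case (Add j k)
    then show ?thesis using G unfolding poly_on_Rp_def
      by (intro exI[of _ "\<lambda>x. G j x + G k x"]) (auto intro: poly_fun.padd)
  next
    case (Mul j k)
    then show ?thesis using G unfolding poly_on_Rp_def
      by (intro exI[of _ "\<lambda>x. G j x * G k x"]) (auto intro: poly_fun.pmul)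
  next
    case (AddC c j)
    then show ?thesis using G unfolding poly_on_Rp_def
      by (intro exI[of _ "\<lambda>x. G j x + c"]) (auto intro: poly_fun.padd poly_fun.pconst)
  next
    case (MulC c j)
    then show ?thesis using G unfolding poly_on_Rp_def
      by (intro exI[of _ "\<lambda>x. G j x * c"]) (auto intro: poly_fun.pmul poly_fun.pconst)
  qed (use assms(1) in simp)
qed

lemma poly_on_Rp_exec_nth:
  assumes "relu_free P" "args_earlier p P" "k < p + length P"
  shows "poly_on_Rp p (\<lambda>x. exec P x ! k)"
  using assms
proof (induction P arbitrary: k rule: rev_induct)
  case Nil
  then show ?case unfolding poly_on_Rp_def by (auto intro: poly_fun.pcoord)
next
  case (snoc i P)
  have P: "relu_free P" "args_earlier p P" and i: "kind i \<noteq> OpRelu" "\<forall>j\<in>set (args i). j < p + length P"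
    using snoc.prems(1,2) by (auto simp: relu_free_def args_earlier_snoc)
  show ?case
  proof (cases "k < p + length P")
    case True
    have "exec (P @ [i]) x ! k = exec P x ! k" if "length x = p" for x
      using True that by (simp add: exec_snoc nth_append length_exec)
    with snoc.IH[OF P True] show ?thesis by (subst poly_on_Rp_cong) auto
  next
    case False
    then have k: "k = p + length P" using snoc.prems(3) by simp
    have "exec (P @ [i]) x ! k = apply_instr i (exec P x)" if "length x = p" for x
      using k that by (simp add: exec_snoc nth_append length_exec)
    moreover have "poly_on_Rp p (\<lambda>x. apply_instr i (exec P x))"
      using i snoc.IH[OF P] by (intro poly_on_Rp_apply_instr) auto
    ultimately show ?thesis by (subst poly_on_Rp_cong) auto
  qed
qed

lemma poly_on_Rp_run:
  assumes "wf_prog p P" "relu_free P"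
  shows "poly_on_Rp p (run P)"
proof -
  have "1 \<le> p + length P" "args_earlier p P" using assms(1) by (auto simp: wf_prog_iff_args_earlier)
  then have "poly_on_Rp p (\<lambda>x. exec P x ! (p + length P - 1))"
    by (intro poly_on_Rp_exec_nth assms(2)) auto
  moreover have "run P x = exec P x ! (p + length P - 1)" if "length x = p" for x
    using \<open>1 \<le> p + length P\<close> that by (simp add: run_eq_nth_exec)
  ultimately show ?thesis by (subst poly_on_Rp_cong) auto
qed

definition linearizes_relu :: "instr \<Rightarrow> instr \<Rightarrow> bool" where
  "linearizes_relu i i' \<longleftrightarrow> (i' = i \<and> kind i \<noteq> OpRelu) \<or> (\<exists>j c. i = Relu j \<and> i' = MulC c j)"

lemma linearizes_relu_args: "linearizes_relu i i' \<Longrightarrow> args i' = args i"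
  unfolding linearizes_relu_def by auto

lemma relu_free_if_linearizes_relu: "list_all2 linearizes_relu P P' \<Longrightarrow> relu_free P'"
  unfolding relu_free_def linearizes_relu_def by (induction rule: list_all2_induct) auto

lemma args_earlier_if_linearizes_relu:
  assumes "list_all2 linearizes_relu P P'"
  shows "args_earlier p P' \<longleftrightarrow> args_earlier p P"
proof -
  have "length P' = length P" "\<And>k. k < length P \<Longrightarrow> args (P' ! k) = args (P ! k)"
    using assms by (auto simp: list_all2_lengthD list_all2_nthD linearizes_relu_args)
  then show ?thesis unfolding args_earlier_def by simp
qed

lemma prog_cost_if_linearizes_relu:
  assumes "list_all2 linearizes_relu P P'" "cost OpRelu = cost OpMulC"
  shows "prog_cost cost P' = prog_cost cost P"
  using assms(1) unfolding prog_cost_def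
  by (induction rule: list_all2_induct) (use assms(2) in \<open>auto simp: linearizes_relu_def\<close>)

lemma relu_poly_fun_linear_on_open_subset:
  assumes "open_Rp p U" "U \<noteq> {}" "poly_fun p g"
  obtains U' c where "U' \<subseteq> U" "U' \<noteq> {}" "open_Rp p U'" "\<forall>x\<in>U'. relu (g x) = g x * c"
proof (cases "\<exists>x\<in>U. g x > 0")
  case True
  then show ?thesis
    using that[of "{x\<in>U. g x > 0}" 1] open_Rp_poly_fun_pos[OF assms(1,3)] by (auto simp: relu_def)
next
  case False
  then have "\<forall>x\<in>U. relu (g x) = g x * 0" by (simp add: relu_def not_less max_absorb1)
  then show ?thesis using that assms(1,2) by blast
qed

lemma linearize_relus:
  assumes "open_Rp p S" "S \<noteq> {}" "args_earlier p P"
  shows "\<exists>U P'. U \<subseteq> S \<and> U \<noteq> {} \<and> open_Rp p U \<and> list_all2 linearizes_relu P P' \<and>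
           (\<forall>x\<in>U. exec P' x = exec P x)"
  using assms(3)
proof (induction P rule: rev_induct)
  case Nil
  show ?case using assms(1,2) by (intro exI[of _ S] exI[of _ "[]"]) simp
next
  case (snoc i P)
  then obtain U P' where U: "U \<subseteq> S" "U \<noteq> {}" "open_Rp p U" and lin: "list_all2 linearizes_relu P P'"
    and agree: "\<forall>x\<in>U. exec P' x = exec P x"
    by (auto simp: args_earlier_snoc)
  show ?case
  proof (cases "kind i = OpRelu")
    case False
    then have "list_all2 linearizes_relu (P @ [i]) (P' @ [i])"
      using lin by (intro list_all2_appendI) (auto simp: linearizes_relu_def)
    then show ?thesis using U agree
      by (intro exI[of _ U] exI[of _ "P' @ [i]"]) (auto simp: exec_snoc)
  next
    case True
    then obtain j where i: "i = Relu j" by (cases i) auto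
    have "poly_on_Rp p (\<lambda>x. exec P' x ! j)"
      using snoc.prems lin i
      by (intro poly_on_Rp_exec_nth relu_free_if_linearizes_relu)
        (auto simp: args_earlier_snoc args_earlier_if_linearizes_relu list_all2_lengthD)
    then obtain g where g: "poly_fun p g" "\<And>x. length x = p \<Longrightarrow> exec P' x ! j = g x"
      unfolding poly_on_Rp_def by blast
    obtain U' c where U': "U' \<subseteq> U" "U' \<noteq> {}" "open_Rp p U'" and c: "\<forall>x\<in>U'. relu (g x) = g x * c"
      using relu_poly_fun_linear_on_open_subset[OF U(3,2) g(1)] by blast
    have "exec (P' @ [MulC c j]) x = exec (P @ [i]) x" if "x \<in> U'" for x
    proof -
      have "length x = p" using U'(3) that unfolding open_Rp_def by blast
      moreover have "exec P' x = exec P x" using that U'(1) agree by blast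
      ultimately have "exec P x ! j = g x" using g(2) by metis
      then show ?thesis using \<open>exec P' x = exec P x\<close> that c by (simp add: exec_snoc i)
    qed
    moreover have "list_all2 linearizes_relu (P @ [i]) (P' @ [MulC c j])"
      using lin i by (intro list_all2_appendI) (auto simp: linearizes_relu_def)
    ultimately show ?thesis using U U'
      by (intro exI[of _ U'] exI[of _ "P' @ [MulC c j]"]) auto
  qed
qed

theorem lemmaC1:
  fixes p :: nat and Q :: "real list \<Rightarrow> real" and P1 :: "instr list"
    and S :: "real list set" and cost :: "op_kind \<Rightarrow> real"
  assumes "poly_fun p Q"
    and "wf_prog p P1"
    and "S \<noteq> {}" and "open_Rp p S"
    and "\<forall>x \<in> S. run P1 x = Q x"
  shows "\<exists>P2. wf_prog p P2 \<and> relu_free P2 \<and>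
           (\<forall>x. length x = p \<longrightarrow> run P2 x = Q x) \<and>
           (cost OpRelu = cost OpMulC \<longrightarrow> prog_cost cost P2 = prog_cost cost P1)"
proof -
  have args: "args_earlier p P1" using assms(2) by (simp add: wf_prog_iff_args_earlier)
  obtain U P2 where U: "U \<subseteq> S" "U \<noteq> {}" "open_Rp p U"
    and lin: "list_all2 linearizes_relu P1 P2" and agree: "\<forall>x\<in>U. exec P2 x = exec P1 x"
    using linearize_relus[OF assms(4,3) args] by auto
  have wf: "wf_prog p P2"
    using assms(2) lin by (simp add: wf_prog_iff_args_earlier args_earlier_if_linearizes_relu
        list_all2_lengthD)
  have relu_free: "relu_free P2" using lin by (rule relu_free_if_linearizes_relu)
  obtain g where g: "poly_fun p g" "\<And>x. length x = p \<Longrightarrow> run P2 x = g x"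
    using poly_on_Rp_run[OF wf relu_free] unfolding poly_on_Rp_def by blast
  have "g x = Q x" if "x \<in> U" for x
  proof -
    have "length x = p" using U(3) that unfolding open_Rp_def by blast
    then have "g x = run P1 x" using g(2) agree that unfolding run_def by metis
    also have "\<dots> = Q x" using assms(5) U(1) that by blast
    finally show ?thesis .
  qed
  then have "run P2 x = Q x" if "length x = p" for x
    using poly_fun_eq_if_eq_on_open[OF g(1) assms(1) U(3,2)] g(2) that by simp
  then show ?thesis
    using wf relu_free prog_cost_if_linearizes_relu[OF lin] by blast
qed

end
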